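(* Let $\mathcal G=(\mathcal V,\mathcal E,W)$ be a network, $h\in\mathbb{R}^{\mathcal V}$, and consider the SNC game with binary actions on $\mathcal G$ with external field $h$, with set of Nash equilibria $\mathcal N$. Let $\mathcal V=\mathcal R\cup\mathcal S$, $\mathcal R\cap\mathcal S=\emptyset$, be a binary partition such that $\mathcal G_{\mathcal R}$ and $\mathcal G_{\mathcal S}$ are both structurally balanced, and let $\tau\in\{\pm1\}^{\mathcal R}$ be such that $\mathcal G_{\mathcal R}^{[\tau]}$ is unsigned. Let $h^-,h^+\in\mathbb{R}^{\mathcal R}$ be given by $h_i^+=\tau_ih_i+w_i^{\mathcal S}$ and $h_i^-=\tau_ih_i-w_i^{\mathcal S}$ for $i\in\mathcal R$. If $\mathcal G_{\mathcal R}$ is $(h^-,h^+)$-indecomposable and $w_i^{\mathcal R}-|h_i|>w_i^{\mathcal S}$ for all $i\in\mathcal R$, then the set $\{x^*\in\mathcal N:\ x^*_{\mathcal R}\in\{\tau,-\tau\}\}$ is globally BR-reachable.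
   Context: A network is a triple $\mathcal G=(\mathcal V,\mathcal E,W)$ where $\mathcal V$ is a finite nonempty set, $\mathcal E\subseteq\mathcal V\times\mathcal V$, and $W\in\mathbb{R}^{\mathcal V\times\mathcal V}$ has zero diagonal and satisfies $W_{ij}\neq0$ iff $(i,j)\in\mathcal E$ (weights may have either sign). It is unsigned if $W\ge0$ entrywise. For $\mathcal U\subseteq\mathcal V$, the subnetwork $\mathcal G_{\mathcal U}$ has node set $\mathcal U$, links $\mathcal E\cap(\mathcal U\times\mathcal U)$ and weight matrix $W_{\mathcal U\mathcal U}$. A network is structurally balanced if its node set can be written as a disjoint union of two sets with nonnegative weights on links within each set and nonpositive weights on links between the two sets. For $\tau\in\{\pm1\}^{\mathcal R}$, $\mathcal G_{\mathcal R}^{[\tau]}$ is the network with the same nodes and links as $\mathcal G_{\mathcal R}$ and weight matrix $[\tau]W_{\mathcal R\mathcal R}[\tau]$, where $[\tau]$ is the diagonal matrix with diagonal $\tau$. For $i\in\mathcal V$ and $\mathcal B\subseteq\mathcal V$, $w_i^{\mathcal B}=\sum_{j\in\mathcal B}|W_{ij}|$. Indecomposability: a network with node set $\mathcal U$ and $h^-\le h^+$ in $\mathbb{R}^{\mathcal U}$ is $(h^-,h^+)$-indecomposable if for every partition $\mathcal U=\mathcal U^-\cup\mathcal U^+$ into two disjoint nonempty sets there is a node $i$ with either $i\in\mathcal U^+$ and $w_i^{\mathcal U^+}+h_i^+<w_i^{\mathcal U^-}$, or $i\in\mathcal U^-$ and $w_i^{\mathcal U^-}-h_i^-<w_i^{\mathcal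 U^+}$. The SNC game with binary actions on $\mathcal G$ with external field $h\in\mathbb{R}^{\mathcal V}$ has player set $\mathcal V$, action set $\{-1,+1\}$ for each player, strategy profiles $\mathcal X=\{\pm1\}^{\mathcal V}$, and utilities $u_i(x)=h_ix_i+x_i\sum_{j\in\mathcal V}W_{ij}x_j$. Best responses $\mathcal B_i(x_{-i})=\arg\max_{x_i\in\{\pm1\}}u_i(x_i,x_{-i})$; Nash equilibrium: $x^*_i\in\mathcal B_i(x^*_{-i})$ for all $i$. A BR-path of length $l\ge0$ from $x$ to $y$ is a sequence $x^{(0)}=x,\dots,x^{(l)}=y$ such that for each $k$ some player $i_k$ has $x^{(k)}_{-i_k}=x^{(k-1)}_{-i_k}$ and $x^{(k)}_{i_k}\in\mathcal B_{i_k}(x^{(k-1)}_{-i_k})\setminus\{x^{(k-1)}_{i_k}\}$. A set $\mathcal X^*\subseteq\mathcal X$ is globally BR-reachable if from every profile there is a BR-path to some element of $\mathcal X^*$. *)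

theory Defs
  imports Complex_Main
begin

text \<open>Networks: the node set is a finite type 'v; W :: 'v => 'v => real is the weight
matrix (zero diagonal assumed in the theorem); the link set is {(i,j). W i j \<noteq> 0}.\<close>

definition structurally_balanced :: "'v set \<Rightarrow> ('v \<Rightarrow> 'v \<Rightarrow> real) \<Rightarrow> bool" where
  "structurally_balanced U W \<longleftrightarrow>
     (\<exists>A B. A \<inter> B = {} \<and> A \<union> B = U \<and>
        (\<forall>i\<in>U. \<forall>j\<in>U. ((i \<in> A \<and> j \<in> A) \<or> (i \<in> B \<and> j \<in> B)) \<longrightarrow> W i j \<ge> 0) \<and>
        (\<forall>i\<in>U. \<forall>j\<in>U. ((i \<in> A \<and> j \<in> B) \<or> (i \<in> B \<and> j \<in> A)) \<longrightarrow> W i j \<le> 0))"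

definition gauge :: "('v \<Rightarrow> real) \<Rightarrow> ('v \<Rightarrow> 'v \<Rightarrow> real) \<Rightarrow> 'v \<Rightarrow> 'v \<Rightarrow> real" where
  "gauge \<tau> W i j = \<tau> i * W i j * \<tau> j"

definition unsigned_on :: "'v set \<Rightarrow> ('v \<Rightarrow> 'v \<Rightarrow> real) \<Rightarrow> bool" where
  "unsigned_on U W \<longleftrightarrow> (\<forall>i\<in>U. \<forall>j\<in>U. W i j \<ge> 0)"

definition wsum :: "('v \<Rightarrow> 'v \<Rightarrow> real) \<Rightarrow> 'v \<Rightarrow> 'v set \<Rightarrow> real" where
  "wsum W i B = (\<Sum>j\<in>B. \<bar>W i j\<bar>)"

definition indecomposable :: "'v set \<Rightarrow> ('v \<Rightarrow> 'v \<Rightarrow> real) \<Rightarrow> ('v \<Rightarrow> real) \<Rightarrow> ('v \<Rightarrow> real) \<Rightarrow> bool" where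
  "indecomposable U W hm hp \<longleftrightarrow>
     (\<forall>Um Up. Um \<inter> Up = {} \<and> Um \<union> Up = U \<and> Um \<noteq> {} \<and> Up \<noteq> {} \<longrightarrow>
        (\<exists>i. (i \<in> Up \<and> wsum W i Up + hp i < wsum W i Um) \<or>
             (i \<in> Um \<and> wsum W i Um - hm i < wsum W i Up)))"

definition profiles :: "('v \<Rightarrow> real) set" where
  "profiles = {x. \<forall>i. x i \<in> {-1, 1}}"

definition utility :: "('v::finite \<Rightarrow> 'v \<Rightarrow> real) \<Rightarrow> ('v \<Rightarrow> real) \<Rightarrow> 'v \<Rightarrow> ('v \<Rightarrow> real) \<Rightarrow> real" where
  "utility W h i x = h i * x i + x i * (\<Sum>j\<in>UNIV. W i j * x j)"

definition best_resp :: "('v::finite \<Rightarrow> 'v \<Rightarrow> real) \<Rightarrow> ('v \<Rightarrow> real) \<Rightarrow> 'v \<Rightarrow> ('v \<Rightarrow> real) \<Rightarrow> real set" where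
  "best_resp W h i x = {a \<in> {-1, 1}. \<forall>b\<in>{-1, 1}. utility W h i (x(i := b)) \<le> utility W h i (x(i := a))}"

definition nash :: "('v::finite \<Rightarrow> 'v \<Rightarrow> real) \<Rightarrow> ('v \<Rightarrow> real) \<Rightarrow> ('v \<Rightarrow> real) set" where
  "nash W h = {x \<in> profiles. \<forall>i. x i \<in> best_resp W h i x}"

definition br_step :: "('v::finite \<Rightarrow> 'v \<Rightarrow> real) \<Rightarrow> ('v \<Rightarrow> real) \<Rightarrow> ('v \<Rightarrow> real) \<Rightarrow> ('v \<Rightarrow> real) \<Rightarrow> bool" where
  "br_step W h x y \<longleftrightarrow> (\<exists>i a. a \<in> best_resp W h i x \<and> a \<noteq> x i \<and> y = x(i := a))"

definition globally_BR_reachable :: "('v::finite \<Rightarrow> 'v \<Rightarrow> real) \<Rightarrow> ('v \<Rightarrow> real) \<Rightarrow> ('v \<Rightarrow> real) set \<Rightarrow> bool" where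
  "globally_BR_reachable W h T \<longleftrightarrow> (\<forall>x\<in>profiles. \<exists>y\<in>T. (br_step W h)\<^sup>*\<^sup>* x y)"

end

theory Submission
  imports Defs
begin

(* With zero diagonal, player i best-responds iff x_i F_i(x) >= 0, where F_i(x) = h_i + sum_j W_ij x_j
   is its local field.  If a player set P becomes unsigned under a gauge rho, then moving a player of
   P from rho_i to -rho_i lowers rho_j F_j for all j in P.  So the players of P can first move towards
   rho until each one off rho strictly prefers to stay off it, and then leave rho one at a time,
   preserving that property, until all of P best-respond.
   On R with gauge tau such a stable profile is a consensus on tau or -tau: otherwise
   indecomposability, combined with |sum_{j in S} W_ij x_j| <= w_i^S, exhibits a player of R who
   does not best-respond.  Relaxing S afterwards, with the gauge coming from its structural balance,
   leaves R fixed, and w_i^R - |h_i| > w_i^S makes the consensus a best response whatever S plays. *)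

definition local_field :: "('v::finite \<Rightarrow> 'v \<Rightarrow> real) \<Rightarrow> ('v \<Rightarrow> real) \<Rightarrow> 'v \<Rightarrow> ('v \<Rightarrow> real) \<Rightarrow> real" where
  "local_field W h i x = h i + (\<Sum>j\<in>UNIV. W i j * x j)"

lemma local_field_upd:
  "local_field W h i (x(k := b)) = local_field W h i x + W i k * (b - x k)"
proof -
  have "(\<Sum>j\<in>UNIV. W i j * (x(k := b)) j)
      = (\<Sum>j\<in>UNIV. W i j * x j + (if j = k then W i k * (b - x k) else 0))"
    by (rule sum.cong) (auto simp: algebra_simps)
  then show ?thesis
    by (simp add: local_field_def sum.distrib)
qed

lemma utility_upd_self:
  assumes "W i i = 0"
  shows "utility W h i (x(i := b)) = b * local_field W h i x"
  using local_field_upd[of W h i x i b] assms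
  by (simp add: utility_def local_field_def algebra_simps)

lemma best_resp_iff:
  assumes "W i i = 0" and "a \<in> {-1, 1}"
  shows "a \<in> best_resp W h i x \<longleftrightarrow> 0 \<le> a * local_field W h i x"
  using assms by (auto simp: best_resp_def utility_upd_self)

lemma profilesD: "x \<in> profiles \<Longrightarrow> x i \<in> {-1, 1}"
  by (simp add: profiles_def)

lemma profiles_upd: "x \<in> profiles \<Longrightarrow> a \<in> {-1, 1} \<Longrightarrow> x(i := a) \<in> profiles"
  by (simp add: profiles_def)

lemma br_step_upd:
  assumes "W i i = 0" and "a \<in> {-1, 1}" and "a \<noteq> x i" and "0 \<le> a * local_field W h i x"
  shows "br_step W h x (x(i := a))"
  using assms best_resp_iff unfolding br_step_def by blast

lemma rtranclp_reach_by_measure: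
  fixes m :: "'a \<Rightarrow> nat"
  assumes step: "\<And>x. P x \<Longrightarrow> \<not> Q x \<Longrightarrow> \<exists>y. r x y \<and> P y \<and> m y < m x"
    and "P x"
  shows "\<exists>y. r\<^sup>*\<^sup>* x y \<and> P y \<and> Q y"
  using \<open>P x\<close>
proof (induction "m x" arbitrary: x rule: less_induct)
  case less
  show ?case
  proof (cases "Q x")
    case False
    then obtain y where y: "r x y" "P y" "m y < m x"
      using step less.prems by blast
    then obtain z where "r\<^sup>*\<^sup>* y z" "P z" "Q z"
      using less.hyps by blast
    then show ?thesis
      using y by (meson converse_rtranclp_into_rtranclp)
  qed (use less.prems in blast)
qed

definition firm_dissent :: "'v set \<Rightarrow> ('v \<Rightarrow> real) \<Rightarrow> ('v::finite \<Rightarrow> 'v \<Rightarrow> real) \<Rightarrow> ('v \<Rightarrow> real) \<Rightarrow> ('v \<Rightarrow> real) \<Rightarrow> bool" where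
  "firm_dissent P \<rho> W h x \<longleftrightarrow> (\<forall>i\<in>P. x i \<noteq> \<rho> i \<longrightarrow> \<rho> i * local_field W h i x < 0)"

lemma br_reach_firm_dissent:
  assumes diag: "\<forall>i. W i i = 0" and \<rho>: "\<forall>i\<in>P. \<rho> i \<in> {-1, 1}" and x: "x \<in> profiles"
  shows "\<exists>y. (br_step W h)\<^sup>*\<^sup>* x y \<and> (y \<in> profiles \<and> (\<forall>j. j \<notin> P \<longrightarrow> y j = x j))
           \<and> firm_dissent P \<rho> W h y"
proof -
  have step: "\<exists>z. br_step W h y z \<and> (z \<in> profiles \<and> (\<forall>j. j \<notin> P \<longrightarrow> z j = x j))
      \<and> card {j\<in>P. z j \<noteq> \<rho> j} < card {j\<in>P. y j \<noteq> \<rho> j}"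
    if y: "y \<in> profiles \<and> (\<forall>j. j \<notin> P \<longrightarrow> y j = x j)" and "\<not> firm_dissent P \<rho> W h y" for y
  proof -
    obtain i where i: "i \<in> P" "y i \<noteq> \<rho> i" "0 \<le> \<rho> i * local_field W h i y"
      using \<open>\<not> firm_dissent P \<rho> W h y\<close> by (auto simp: firm_dissent_def not_less)
    have "{j\<in>P. (y(i := \<rho> i)) j \<noteq> \<rho> j} \<subset> {j\<in>P. y j \<noteq> \<rho> j}"
      using i by auto
    then have "card {j\<in>P. (y(i := \<rho> i)) j \<noteq> \<rho> j} < card {j\<in>P. y j \<noteq> \<rho> j}"
      by (simp add: psubset_card_mono)
    moreover have "br_step W h y (y(i := \<rho> i))"
      using br_step_upd[of W i "\<rho> i" y h] diag \<rho> i by simp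
    moreover have "y(i := \<rho> i) \<in> profiles"
      using profiles_upd[of y "\<rho> i" i] y \<rho> i by simp
    moreover have "\<forall>j. j \<notin> P \<longrightarrow> (y(i := \<rho> i)) j = x j"
      using y i by simp
    ultimately show ?thesis
      by blast
  qed
  have init: "x \<in> profiles \<and> (\<forall>j. j \<notin> P \<longrightarrow> x j = x j)"
    using x by simp
  show ?thesis
    by (rule rtranclp_reach_by_measure[where m = "\<lambda>y. card {j\<in>P. y j \<noteq> \<rho> j}"]) (fact step, fact init)
qed

lemma firm_dissent_upd:
  assumes diag: "\<forall>i. W i i = 0" and uns: "unsigned_on P (gauge \<rho> W)"
    and fd: "firm_dissent P \<rho> W h x"
    and i: "i \<in> P" "x i = \<rho> i" "\<rho> i * local_field W h i x < 0"
  shows "firm_dissent P \<rho> W h (x(i := - \<rho> i))"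
  unfolding firm_dissent_def
proof (intro ballI impI)
  fix j
  assume j: "j \<in> P" "(x(i := - \<rho> i)) j \<noteq> \<rho> j"
  show "\<rho> j * local_field W h j (x(i := - \<rho> i)) < 0"
  proof (cases "j = i")
    case True
    then show ?thesis
      using i diag by (simp add: local_field_upd)
  next
    case False
    then have "\<rho> j * local_field W h j x < 0"
      using fd j by (simp add: firm_dissent_def)
    moreover have "\<rho> j * local_field W h j (x(i := - \<rho> i))
        = \<rho> j * local_field W h j x - 2 * (\<rho> j * W j i * \<rho> i)"
      using i by (simp add: local_field_upd algebra_simps)
    moreover have "0 \<le> \<rho> j * W j i * \<rho> i"
      using uns i j by (simp add: unsigned_on_def gauge_def)
    ultimately show ?thesis
      by linarith
  qed
qed

lemma firm_dissent_not_best_resp: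
  assumes diag: "W i i = 0" and fd: "firm_dissent P \<rho> W h x" and x: "x \<in> profiles"
    and i: "i \<in> P" and \<rho>: "\<rho> i \<in> {-1, 1}" and not_br: "x i \<notin> best_resp W h i x"
  shows "x i = \<rho> i" and "\<rho> i * local_field W h i x < 0"
proof -
  have xi_neg: "x i * local_field W h i x < 0"
    using best_resp_iff[of W i "x i" h x] diag profilesD[OF x, of i] not_br by simp
  show xi: "x i = \<rho> i"
  proof (rule ccontr)
    assume ne: "x i \<noteq> \<rho> i"
    then have "x i = - \<rho> i"
      using profilesD[OF x, of i] \<rho> by auto
    moreover have "\<rho> i * local_field W h i x < 0"
      using fd i ne by (simp add: firm_dissent_def)
    ultimately show False
      using xi_neg by simp
  qed
  show "\<rho> i * local_field W h i x < 0"
    using xi_neg xi by simp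
qed

lemma br_reach_stable_from_firm_dissent:
  assumes diag: "\<forall>i. W i i = 0" and \<rho>: "\<forall>i\<in>P. \<rho> i \<in> {-1, 1}"
    and uns: "unsigned_on P (gauge \<rho> W)"
    and x: "x \<in> profiles" and fd: "firm_dissent P \<rho> W h x"
  shows "\<exists>y. (br_step W h)\<^sup>*\<^sup>* x y
           \<and> (y \<in> profiles \<and> (\<forall>j. j \<notin> P \<longrightarrow> y j = x j) \<and> firm_dissent P \<rho> W h y)
           \<and> (\<forall>i\<in>P. y i \<in> best_resp W h i y)"
proof -
  have step: "\<exists>z. br_step W h y z
      \<and> (z \<in> profiles \<and> (\<forall>j. j \<notin> P \<longrightarrow> z j = x j) \<and> firm_dissent P \<rho> W h z)
      \<and> card {j\<in>P. z j = \<rho> j} < card {j\<in>P. y j = \<rho> j}"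
    if y: "y \<in> profiles \<and> (\<forall>j. j \<notin> P \<longrightarrow> y j = x j) \<and> firm_dissent P \<rho> W h y"
      and "\<not> (\<forall>i\<in>P. y i \<in> best_resp W h i y)" for y
  proof -
    obtain i where i: "i \<in> P" "y i \<notin> best_resp W h i y"
      using \<open>\<not> (\<forall>i\<in>P. y i \<in> best_resp W h i y)\<close> by blast
    have \<rho>i: "\<rho> i \<in> {-1, 1}" and diag_i: "W i i = 0"
      using \<rho> diag i by auto
    have yP: "y \<in> profiles" and fd_y: "firm_dissent P \<rho> W h y"
      using y by auto
    have yi: "y i = \<rho> i" and neg: "\<rho> i * local_field W h i y < 0"
      using firm_dissent_not_best_resp[OF diag_i fd_y yP i(1) \<rho>i i(2)] by auto
    have "\<rho> i \<noteq> 0"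
      using \<rho>i by auto
    then have "{j\<in>P. (y(i := - \<rho> i)) j = \<rho> j} \<subset> {j\<in>P. y j = \<rho> j}"
      using i yi by auto
    then have "card {j\<in>P. (y(i := - \<rho> i)) j = \<rho> j} < card {j\<in>P. y j = \<rho> j}"
      by (simp add: psubset_card_mono)
    moreover have "br_step W h y (y(i := - \<rho> i))"
      using br_step_upd[of W i "- \<rho> i" y h] diag_i \<rho>i \<open>\<rho> i \<noteq> 0\<close> yi neg by auto
    moreover have "y(i := - \<rho> i) \<in> profiles"
      using profiles_upd[of y "- \<rho> i" i] yP \<rho>i by auto
    moreover have "\<forall>j. j \<notin> P \<longrightarrow> (y(i := - \<rho> i)) j = x j"
      using y i by simp
    moreover have "firm_dissent P \<rho> W h (y(i := - \<rho> i))"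
      using firm_dissent_upd[OF diag uns fd_y i(1) yi neg] .
    ultimately show ?thesis
      by blast
  qed
  have init: "x \<in> profiles \<and> (\<forall>j. j \<notin> P \<longrightarrow> x j = x j) \<and> firm_dissent P \<rho> W h x"
    using x fd by simp
  show ?thesis
    by (rule rtranclp_reach_by_measure[where m = "\<lambda>y. card {j\<in>P. y j = \<rho> j}"]) (fact step, fact init)
qed

lemma br_reach_stable:
  assumes diag: "\<forall>i. W i i = 0" and \<rho>: "\<forall>i\<in>P. \<rho> i \<in> {-1, 1}"
    and uns: "unsigned_on P (gauge \<rho> W)" and x: "x \<in> profiles"
  obtains y where "(br_step W h)\<^sup>*\<^sup>* x y" and "y \<in> profiles" and "\<forall>j. j \<notin> P \<longrightarrow> y j = x j"
    and "firm_dissent P \<rho> W h y" and "\<forall>i\<in>P. y i \<in> best_resp W h i y"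
proof -
  obtain x1 where x1: "(br_step W h)\<^sup>*\<^sup>* x x1" "x1 \<in> profiles" "\<forall>j. j \<notin> P \<longrightarrow> x1 j = x j"
    "firm_dissent P \<rho> W h x1"
    using br_reach_firm_dissent[of W P \<rho> x h] diag \<rho> x by blast
  then obtain y where "(br_step W h)\<^sup>*\<^sup>* x1 y" "y \<in> profiles" "\<forall>j. j \<notin> P \<longrightarrow> y j = x1 j"
    "firm_dissent P \<rho> W h y" "\<forall>i\<in>P. y i \<in> best_resp W h i y"
    using br_reach_stable_from_firm_dissent[OF diag \<rho> uns] by blast
  with x1 show ?thesis
    by (metis rtranclp_trans that)
qed

lemma structurally_balanced_gauge:
  assumes "structurally_balanced S W"
  obtains \<sigma> :: "'v \<Rightarrow> real" where "\<forall>i. \<sigma> i \<in> {-1, 1}" and "unsigned_on S (gauge \<sigma> W)"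
proof -
  obtain A B where AB: "A \<inter> B = {}" "A \<union> B = S"
    "\<forall>i\<in>S. \<forall>j\<in>S. ((i \<in> A \<and> j \<in> A) \<or> (i \<in> B \<and> j \<in> B)) \<longrightarrow> W i j \<ge> 0"
    "\<forall>i\<in>S. \<forall>j\<in>S. ((i \<in> A \<and> j \<in> B) \<or> (i \<in> B \<and> j \<in> A)) \<longrightarrow> W i j \<le> 0"
    using assms unfolding structurally_balanced_def by blast
  define \<sigma> where "\<sigma> i = (if i \<in> A then 1 else -1 :: real)" for i
  have "\<forall>i. \<sigma> i \<in> {-1, 1}"
    by (simp add: \<sigma>_def)
  moreover have "0 \<le> \<sigma> i * W i j * \<sigma> j" if "i \<in> S" "j \<in> S" for i j
    using AB that unfolding \<sigma>_def
    by (cases "i \<in> A"; cases "j \<in> A") (auto simp: mult_nonpos_nonpos mult_nonneg_nonpos)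
  then have "unsigned_on S (gauge \<sigma> W)"
    by (simp add: unsigned_on_def gauge_def)
  ultimately show ?thesis
    using that by blast
qed

lemma gauge_weighted_sum:
  assumes uns: "unsigned_on R (gauge \<tau> W)" and \<tau>: "\<forall>i\<in>R. \<tau> i \<in> {-1, 1}"
    and x: "x \<in> profiles" and i: "i \<in> R" and fin: "finite R"
  shows "\<tau> i * (\<Sum>j\<in>R. W i j * x j)
           = wsum W i {j\<in>R. x j = \<tau> j} - wsum W i {j\<in>R. x j \<noteq> \<tau> j}"
proof -
  have signed_term: "\<tau> i * (W i j * x j) = (if x j = \<tau> j then \<bar>W i j\<bar> else - \<bar>W i j\<bar>)"
    if j: "j \<in> R" for j
  proof -
    have "\<bar>\<tau> i\<bar> = 1" "\<bar>\<tau> j\<bar> = 1"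
      using \<tau> i j by auto
    then have "\<bar>\<tau> i * W i j * \<tau> j\<bar> = \<bar>W i j\<bar>"
      by (simp add: abs_mult)
    moreover have "0 \<le> \<tau> i * W i j * \<tau> j"
      using uns i j by (simp add: unsigned_on_def gauge_def)
    ultimately have gauged: "\<tau> i * W i j * \<tau> j = \<bar>W i j\<bar>"
      by simp
    have "x j = \<tau> j \<or> x j = - \<tau> j"
      using \<tau> j profilesD[OF x, of j] by auto
    then show ?thesis
      using gauged by (auto simp: algebra_simps)
  qed
  have "\<tau> i * (\<Sum>j\<in>R. W i j * x j)
      = (\<Sum>j\<in>R. if x j = \<tau> j then \<bar>W i j\<bar> else - \<bar>W i j\<bar>)"
    unfolding sum_distrib_left by (rule sum.cong) (simp_all add: signed_term)
  also have "\<dots> = wsum W i (R \<inter> {j. x j = \<tau> j}) - wsum W i (R \<inter> - {j. x j = \<tau> j})"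
    by (simp only: sum.If_cases[OF fin] sum_negf wsum_def)
  also have "R \<inter> {j. x j = \<tau> j} = {j\<in>R. x j = \<tau> j}"
    by auto
  also have "R \<inter> - {j. x j = \<tau> j} = {j\<in>R. x j \<noteq> \<tau> j}"
    by auto
  finally show ?thesis .
qed

lemma abs_weighted_sum_le_wsum:
  assumes "x \<in> profiles"
  shows "\<bar>\<Sum>j\<in>B. W i j * x j\<bar> \<le> wsum W i B"
proof -
  have "\<bar>\<Sum>j\<in>B. W i j * x j\<bar> \<le> (\<Sum>j\<in>B. \<bar>W i j * x j\<bar>)"
    by (rule sum_abs)
  also have "\<dots> = wsum W i B"
  proof -
    have "\<bar>x j\<bar> = 1" for j
      using profilesD[OF assms, of j] by auto
    then show ?thesis
      by (simp add: wsum_def abs_mult)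
  qed
  finally show ?thesis .
qed

lemma local_field_gauge_estimate:
  fixes W :: "'v::finite \<Rightarrow> 'v \<Rightarrow> real"
  assumes part: "R \<inter> S = {}" "R \<union> S = UNIV"
    and uns: "unsigned_on R (gauge \<tau> W)" and \<tau>: "\<forall>i\<in>R. \<tau> i \<in> {-1, 1}"
    and x: "x \<in> profiles" and i: "i \<in> R"
  shows "\<bar>\<tau> i * local_field W h i x
            - (\<tau> i * h i + wsum W i {j\<in>R. x j = \<tau> j} - wsum W i {j\<in>R. x j \<noteq> \<tau> j})\<bar>
           \<le> wsum W i S"
proof -
  have "(\<Sum>j\<in>UNIV. W i j * x j) = (\<Sum>j\<in>R. W i j * x j) + (\<Sum>j\<in>S. W i j * x j)"
    using part by (metis finite sum.union_disjoint)
  then have "\<tau> i * local_field W h i x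
      - (\<tau> i * h i + wsum W i {j\<in>R. x j = \<tau> j} - wsum W i {j\<in>R. x j \<noteq> \<tau> j})
      = \<tau> i * (\<Sum>j\<in>S. W i j * x j)"
    using gauge_weighted_sum[OF uns \<tau> x i finite] by (simp add: local_field_def algebra_simps)
  moreover have "\<bar>\<tau> i\<bar> = 1"
    using \<tau> i by auto
  moreover have "\<bar>\<Sum>j\<in>S. W i j * x j\<bar> \<le> wsum W i S"
    by (rule abs_weighted_sum_le_wsum[OF x])
  ultimately show ?thesis
    by (simp add: abs_mult)
qed

lemma consensus_best_resp:
  fixes W :: "'v::finite \<Rightarrow> 'v \<Rightarrow> real"
  assumes diag: "W i i = 0" and part: "R \<inter> S = {}" "R \<union> S = UNIV"
    and uns: "unsigned_on R (gauge \<tau> W)" and \<tau>: "\<forall>i\<in>R. \<tau> i \<in> {-1, 1}"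
    and dom: "wsum W i R - \<bar>h i\<bar> > wsum W i S"
    and x: "x \<in> profiles" and consensus: "\<forall>j\<in>R. x j = \<tau> j" and i: "i \<in> R"
  shows "x i \<in> best_resp W h i x"
proof -
  have all: "{j\<in>R. x j = \<tau> j} = R" and none: "{j\<in>R. x j \<noteq> \<tau> j} = {}"
    using consensus by auto
  have est: "\<bar>\<tau> i * local_field W h i x - (\<tau> i * h i + wsum W i R)\<bar> \<le> wsum W i S"
    using local_field_gauge_estimate[OF part uns \<tau> x i, of h] unfolding all none
    by (simp add: wsum_def)
  have "\<bar>\<tau> i * h i\<bar> = \<bar>h i\<bar>"
    using \<tau> i by (auto simp: abs_mult)
  then have "- \<bar>h i\<bar> \<le> \<tau> i * h i"
    using abs_ge_minus_self[of "\<tau> i * h i"] by linarith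
  then have "0 \<le> \<tau> i * local_field W h i x"
    using est dom by (simp add: abs_le_iff)
  then show ?thesis
    using best_resp_iff[of W i "\<tau> i" h x] diag \<tau> i consensus by simp
qed

lemma stable_consensus:
  fixes W :: "'v::finite \<Rightarrow> 'v \<Rightarrow> real"
  assumes diag: "\<forall>i. W i i = 0" and part: "R \<inter> S = {}" "R \<union> S = UNIV"
    and uns: "unsigned_on R (gauge \<tau> W)" and \<tau>: "\<forall>i\<in>R. \<tau> i \<in> {-1, 1}"
    and indec: "indecomposable R W (\<lambda>i. \<tau> i * h i - wsum W i S) (\<lambda>i. \<tau> i * h i + wsum W i S)"
    and x: "x \<in> profiles" and fd: "firm_dissent R \<tau> W h x"
    and stable: "\<forall>i\<in>R. x i \<in> best_resp W h i x"
  shows "(\<forall>i\<in>R. x i = \<tau> i) \<or> (\<forall>i\<in>R. x i = - \<tau> i)"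
proof (rule ccontr)
  assume mixed: "\<not> ?thesis"
  define Up where "Up = {j\<in>R. x j = \<tau> j}"
  define Um where "Um = {j\<in>R. x j \<noteq> \<tau> j}"
  have "Up \<noteq> {}"
  proof
    assume "Up = {}"
    then have "\<forall>i\<in>R. x i = - \<tau> i"
      using \<tau> profilesD[OF x] unfolding Up_def by force
    with mixed show False
      by blast
  qed
  moreover have "Um \<noteq> {}"
    using mixed unfolding Um_def by auto
  moreover have "Um \<inter> Up = {}" and "Um \<union> Up = R"
    unfolding Um_def Up_def by auto
  ultimately obtain i where
    i: "(i \<in> Up \<and> wsum W i Up + (\<tau> i * h i + wsum W i S) < wsum W i Um)
        \<or> (i \<in> Um \<and> wsum W i Um - (\<tau> i * h i - wsum W i S) < wsum W i Up)"
    using indec unfolding indecomposable_def by blast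
  then have iR: "i \<in> R"
    unfolding Up_def Um_def by auto
  have est: "\<bar>\<tau> i * local_field W h i x - (\<tau> i * h i + wsum W i Up - wsum W i Um)\<bar> \<le> wsum W i S"
    using local_field_gauge_estimate[OF part uns \<tau> x iR] unfolding Up_def Um_def .
  from i show False
  proof
    assume "i \<in> Up \<and> wsum W i Up + (\<tau> i * h i + wsum W i S) < wsum W i Um"
    then have "x i = \<tau> i" and "\<tau> i * local_field W h i x < 0"
      using est unfolding Up_def by (auto simp: abs_le_iff)
    then show False
      using best_resp_iff[of W i "\<tau> i" h x] stable diag \<tau> iR by auto
  next
    assume "i \<in> Um \<and> wsum W i Um - (\<tau> i * h i - wsum W i S) < wsum W i Up"
    then have "x i \<noteq> \<tau> i" and "\<tau> i * local_field W h i x > 0"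
      using est unfolding Um_def by (auto simp: abs_le_iff)
    then show False
      using fd iR by (auto simp: firm_dissent_def)
  qed
qed

theorem corollary3:
  fixes W :: "'v::finite \<Rightarrow> 'v \<Rightarrow> real" and h :: "'v \<Rightarrow> real"
    and R S :: "'v set" and \<tau> :: "'v \<Rightarrow> real"
  assumes diag: "\<forall>i. W i i = 0"
    and part: "R \<inter> S = {}" "R \<union> S = UNIV" "R \<noteq> {}" "S \<noteq> {}"
    and balR: "structurally_balanced R W"
    and balS: "structurally_balanced S W"
    and tau: "\<forall>i\<in>R. \<tau> i \<in> {-1, 1}"
    and uns: "unsigned_on R (gauge \<tau> W)"
    and indec: "indecomposable R W (\<lambda>i. \<tau> i * h i - wsum W i S) (\<lambda>i. \<tau> i * h i + wsum W i S)"
    and dom: "\<forall>i\<in>R. wsum W i R - \<bar>h i\<bar> > wsum W i S"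
  shows "globally_BR_reachable W h
           {x \<in> nash W h. (\<forall>i\<in>R. x i = \<tau> i) \<or> (\<forall>i\<in>R. x i = - \<tau> i)}"
proof -
  obtain \<sigma> where \<sigma>: "\<forall>i. \<sigma> i \<in> {-1, 1}" and uns_S: "unsigned_on S (gauge \<sigma> W)"
    using structurally_balanced_gauge[OF balS] by blast
  have "gauge (\<lambda>i. - \<tau> i) W = gauge \<tau> W"
    by (simp add: fun_eq_iff gauge_def)
  then have uns_neg: "unsigned_on R (gauge (\<lambda>i. - \<tau> i) W)"
    using uns by simp
  have tau_neg: "\<forall>i\<in>R. - \<tau> i \<in> {-1, 1}"
    using tau by auto
  show ?thesis
    unfolding globally_BR_reachable_def
  proof
    fix x0 :: "'v \<Rightarrow> real"
    assume x0: "x0 \<in> profiles"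
    obtain x1 where x1: "(br_step W h)\<^sup>*\<^sup>* x0 x1" "x1 \<in> profiles"
      "firm_dissent R \<tau> W h x1" "\<forall>i\<in>R. x1 i \<in> best_resp W h i x1"
      using br_reach_stable[OF diag tau uns x0] by metis
    obtain x2 where x2: "(br_step W h)\<^sup>*\<^sup>* x1 x2" "x2 \<in> profiles"
      "\<forall>j. j \<notin> S \<longrightarrow> x2 j = x1 j" "\<forall>i\<in>S. x2 i \<in> best_resp W h i x2"
      using br_reach_stable[OF diag _ uns_S x1(2)] \<sigma> by metis
    have "(\<forall>i\<in>R. x1 i = \<tau> i) \<or> (\<forall>i\<in>R. x1 i = - \<tau> i)"
      using stable_consensus[OF diag part(1,2) uns tau indec x1(2-4)] .
    then have consensus: "(\<forall>i\<in>R. x2 i = \<tau> i) \<or> (\<forall>i\<in>R. x2 i = - \<tau> i)"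
      using x2(3) part(1) by auto
    have "\<forall>i\<in>R. x2 i \<in> best_resp W h i x2"
      using consensus consensus_best_resp[OF _ part(1,2) uns tau _ x2(2)]
        consensus_best_resp[OF _ part(1,2) uns_neg tau_neg _ x2(2)] diag dom by blast
    then have "x2 \<in> nash W h"
      using x2(2,4) part(2) by (auto simp: nash_def)
    moreover have "(br_step W h)\<^sup>*\<^sup>* x0 x2"
      using x1(1) x2(1) by (rule rtranclp_trans)
    ultimately show "\<exists>y\<in>{x \<in> nash W h. (\<forall>i\<in>R. x i = \<tau> i) \<or> (\<forall>i\<in>R. x i = - \<tau> i)}.
        (br_step W h)\<^sup>*\<^sup>* x0 y"
      using consensus by blast
  qed
qed

end
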